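(* Let $Q=(G\leftleftarrows A)$ be a group-like graph which is path-connected (as an undirected graph). Then $\phi(I^n(A))=I^{n+1}(G)$ for all $n\ge 0$, where $\phi:\mathbf k[A]\to\mathbf k[G]$ is $\phi(a)=t(a)-s(a)$.
   Context: A group-like graph is a directed graph $(G\overset{s}{\underset{t}{\leftleftarrows}}A)$ with an associative multiplication morphism from its Cartesian square to itself making $G$ a group; it gives a two-sided action of $G$ on $A$ with $s,t$ equivariant ($s(g\cdot a\cdot h)=gs(a)h$, similarly for $t$). $\mathbf k$ is a field of characteristic $0$, $\mathbf k[G]$ the group algebra, $\mathbf k[A]$ the vector space with basis $A$ with the induced $\mathbf k[G]$-bimodule structure. $I(G)$ is the augmentation ideal of $\mathbf k[G]$, $I^0(G)=\mathbf k[G]$, and $I^n(A)\subseteq\mathbf k[A]$ is the span of all $v_1\cdot a\cdot v_2$ with $a\in A$, $v_1\in I^k(G)$, $v_2\in I^{n-k}(G)$, $0\le k\le n$. *)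

theory Defs
  imports "HOL-Algebra.Group"
begin

text \<open>Group algebra k[G] and k[A] as finitely supported functions.\<close>

definition supp :: "('x \<Rightarrow> 'k::zero) \<Rightarrow> 'x set" where
  "supp f = {x. f x \<noteq> 0}"

definition fsfun :: "'x set \<Rightarrow> ('x \<Rightarrow> 'k::zero) set" where
  "fsfun X = {f. finite (supp f) \<and> supp f \<subseteq> X}"

definition kspan :: "('x \<Rightarrow> 'k::field) set \<Rightarrow> ('x \<Rightarrow> 'k) set" where
  "kspan S = \<Inter> {V. (\<lambda>_. 0) \<in> V \<and> S \<subseteq> V
                 \<and> (\<forall>f\<in>V. \<forall>g\<in>V. (\<lambda>x. f x + g x) \<in> V)
                 \<and> (\<forall>c. \<forall>f\<in>V. (\<lambda>x. c * f x) \<in> V)}"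

definition delta :: "'x \<Rightarrow> 'x \<Rightarrow> 'k::zero_neq_one" where
  "delta y = (\<lambda>x. if x = y then 1 else 0)"

definition conv :: "('g, 'b) monoid_scheme \<Rightarrow> ('g \<Rightarrow> 'k::field) \<Rightarrow> ('g \<Rightarrow> 'k) \<Rightarrow> 'g \<Rightarrow> 'k" where
  "conv G u v = (\<lambda>x. \<Sum>p\<in>supp u \<times> supp v.
       if fst p \<otimes>\<^bsub>G\<^esub> snd p = x then u (fst p) * v (snd p) else 0)"

definition augmentation :: "('g \<Rightarrow> 'k::field) \<Rightarrow> 'k" where
  "augmentation u = (\<Sum>x\<in>supp u. u x)"

definition aug_ideal :: "('g, 'b) monoid_scheme \<Rightarrow> ('g \<Rightarrow> 'k::field) set" where
  "aug_ideal G = {u \<in> fsfun (carrier G). augmentation u = 0}"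

fun aug_pow :: "('g, 'b) monoid_scheme \<Rightarrow> nat \<Rightarrow> ('g \<Rightarrow> 'k::field) set" where
  "aug_pow G 0 = fsfun (carrier G)"
| "aug_pow G (Suc n) = kspan {conv G u v | u v. u \<in> aug_ideal G \<and> v \<in> aug_pow G n}"

text \<open>Bimodule action on k[A]: v1 \<cdot> a \<cdot> v2, for the basis element a.\<close>
definition bimod_act :: "('g \<Rightarrow> 'a \<Rightarrow> 'a) \<Rightarrow> ('a \<Rightarrow> 'g \<Rightarrow> 'a)
     \<Rightarrow> ('g \<Rightarrow> 'k::field) \<Rightarrow> 'a \<Rightarrow> ('g \<Rightarrow> 'k) \<Rightarrow> 'a \<Rightarrow> 'k" where
  "bimod_act l r v1 a v2 = (\<lambda>b. \<Sum>p\<in>supp v1 \<times> supp v2.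
       if l (fst p) (r a (snd p)) = b then v1 (fst p) * v2 (snd p) else 0)"

definition aug_pow_A :: "('g, 'b) monoid_scheme \<Rightarrow> 'a set \<Rightarrow> ('g \<Rightarrow> 'a \<Rightarrow> 'a)
     \<Rightarrow> ('a \<Rightarrow> 'g \<Rightarrow> 'a) \<Rightarrow> nat \<Rightarrow> ('a \<Rightarrow> 'k::field) set" where
  "aug_pow_A G A l r n = kspan {bimod_act l r v1 a v2 | v1 a v2 k.
       a \<in> A \<and> k \<le> n \<and> v1 \<in> aug_pow G k \<and> v2 \<in> aug_pow G (n - k)}"

definition phi_map :: "('a \<Rightarrow> 'g) \<Rightarrow> ('a \<Rightarrow> 'g) \<Rightarrow> ('a \<Rightarrow> 'k::field) \<Rightarrow> 'g \<Rightarrow> 'k" where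
  "phi_map s t f = (\<lambda>x. \<Sum>a\<in>supp f. f a * (delta (t a) x - delta (s a) x))"

definition group_like_graph :: "('g, 'b) monoid_scheme \<Rightarrow> 'a set \<Rightarrow> ('a \<Rightarrow> 'g) \<Rightarrow> ('a \<Rightarrow> 'g)
     \<Rightarrow> ('g \<Rightarrow> 'a \<Rightarrow> 'a) \<Rightarrow> ('a \<Rightarrow> 'g \<Rightarrow> 'a) \<Rightarrow> bool" where
  "group_like_graph G A s t l r \<longleftrightarrow> group G
    \<and> (\<forall>a\<in>A. s a \<in> carrier G \<and> t a \<in> carrier G)
    \<and> (\<forall>g\<in>carrier G. \<forall>a\<in>A. l g a \<in> A \<and> r a g \<in> A)
    \<and> (\<forall>g\<in>carrier G. \<forall>h\<in>carrier G. \<forall>a\<in>A. l (g \<otimes>\<^bsub>G\<^esub> h) a = l g (l h a))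
    \<and> (\<forall>g\<in>carrier G. \<forall>h\<in>carrier G. \<forall>a\<in>A. r a (g \<otimes>\<^bsub>G\<^esub> h) = r (r a g) h)
    \<and> (\<forall>g\<in>carrier G. \<forall>h\<in>carrier G. \<forall>a\<in>A. l g (r a h) = r (l g a) h)
    \<and> (\<forall>a\<in>A. l \<one>\<^bsub>G\<^esub> a = a \<and> r a \<one>\<^bsub>G\<^esub> = a)
    \<and> (\<forall>g\<in>carrier G. \<forall>h\<in>carrier G. \<forall>a\<in>A.
         s (l g (r a h)) = g \<otimes>\<^bsub>G\<^esub> s a \<otimes>\<^bsub>G\<^esub> h
       \<and> t (l g (r a h)) = g \<otimes>\<^bsub>G\<^esub> t a \<otimes>\<^bsub>G\<^esub> h)"

definition path_connected_graph :: "'g set \<Rightarrow> 'a set \<Rightarrow> ('a \<Rightarrow> 'g) \<Rightarrow> ('a \<Rightarrow> 'g) \<Rightarrow> bool" where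
  "path_connected_graph V A s t \<longleftrightarrow>
    (\<forall>x\<in>V. \<forall>y\<in>V. (\<lambda>u v. \<exists>a\<in>A. (s a = u \<and> t a = v) \<or> (s a = v \<and> t a = u))\<^sup>*\<^sup>* x y)"

end

theory Submission
  imports Defs
begin

text \<open>The map \<open>\<phi>\<close> sends the generator \<open>v\<^sub>1 \<cdot> a \<cdot> v\<^sub>2\<close> of \<open>I\<^sup>n(A)\<close> to the product
  \<open>v\<^sub>1 (t a - s a) v\<^sub>2\<close> in \<open>k[G]\<close>. As \<open>t a - s a \<in> I(G)\<close> and \<open>I\<^sup>j(G) I\<^sup>m(G) \<subseteq> I\<^sup>j\<^sup>+\<^sup>m(G)\<close>, this
  lies in \<open>I\<^sup>n\<^sup>+\<^sup>1(G)\<close>. Conversely, path-connectedness makes the differences \<open>t a - s a\<close>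
  span \<open>I(G)\<close>, so every generator \<open>x y\<close> of \<open>I\<^sup>n\<^sup>+\<^sup>1(G)\<close> (with \<open>x \<in> I(G)\<close>, \<open>y \<in> I\<^sup>n(G)\<close>) is a
  combination of products \<open>(t a - s a) y = \<phi>(1 \<cdot> a \<cdot> y)\<close>.\<close>

section \<open>Linear spans of functions\<close>

definition is_subspace :: "('x \<Rightarrow> 'k::field) set \<Rightarrow> bool" where
  "is_subspace V \<longleftrightarrow> (\<lambda>_. 0) \<in> V \<and> (\<forall>f\<in>V. \<forall>g\<in>V. (\<lambda>x. f x + g x) \<in> V)
     \<and> (\<forall>c. \<forall>f\<in>V. (\<lambda>x. c * f x) \<in> V)"

lemma subspace_zero: "is_subspace V \<Longrightarrow> (\<lambda>_. 0) \<in> V"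
  unfolding is_subspace_def by blast

lemma subspace_add: "is_subspace V \<Longrightarrow> f \<in> V \<Longrightarrow> g \<in> V \<Longrightarrow> (\<lambda>x. f x + g x) \<in> V"
  unfolding is_subspace_def by blast

lemma subspace_smult: "is_subspace V \<Longrightarrow> f \<in> V \<Longrightarrow> (\<lambda>x. c * f x) \<in> V"
  unfolding is_subspace_def by blast

lemma subspace_sum:
  assumes "is_subspace V" "finite S" "\<And>i. i \<in> S \<Longrightarrow> f i \<in> V"
  shows "(\<lambda>x. \<Sum>i\<in>S. c i * f i x) \<in> V"
  using assms(2,3)
proof (induction S rule: finite_induct)
  case empty
  then show ?case using subspace_zero[OF assms(1)] by simp
next
  case (insert i S)
  then have "(\<lambda>x. c i * f i x) \<in> V" using subspace_smult[OF assms(1)] by blast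
  from subspace_add[OF assms(1) this] insert show ?case by simp
qed

lemma kspan_least: "is_subspace V \<Longrightarrow> S \<subseteq> V \<Longrightarrow> kspan S \<subseteq> V"
  unfolding kspan_def is_subspace_def by blast

lemma is_subspace_kspan: "is_subspace (kspan S)"
  unfolding kspan_def is_subspace_def by auto

lemma kspan_superset: "S \<subseteq> kspan S"
  unfolding kspan_def by blast

lemma supp_add: "supp (\<lambda>x. f x + g x :: 'k::monoid_add) \<subseteq> supp f \<union> supp g"
  unfolding supp_def by auto

lemma supp_smult: "supp (\<lambda>x. c * f x :: 'k::mult_zero) \<subseteq> supp f"
  unfolding supp_def by auto

lemma finite_supp_add:
  "finite (supp f) \<Longrightarrow> finite (supp g) \<Longrightarrow> finite (supp (\<lambda>x. f x + g x :: 'k::monoid_add))"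
  by (rule finite_subset[OF supp_add]) simp

lemma finite_supp_smult: "finite (supp f) \<Longrightarrow> finite (supp (\<lambda>x. c * f x :: 'k::mult_zero))"
  by (rule finite_subset[OF supp_smult])

lemma supp_delta: "supp (delta y :: 'x \<Rightarrow> 'k::zero_neq_one) = {y}"
  unfolding supp_def delta_def by auto

lemma is_subspace_fsfun: "is_subspace (fsfun X :: ('x \<Rightarrow> 'k::field) set)"
  unfolding is_subspace_def
proof (intro conjI ballI allI)
  show "(\<lambda>_. 0) \<in> fsfun X" by (simp add: fsfun_def supp_def)
next
  fix f g :: "'x \<Rightarrow> 'k" assume "f \<in> fsfun X" "g \<in> fsfun X"
  then show "(\<lambda>x. f x + g x) \<in> fsfun X"
    using supp_add[of f g] unfolding fsfun_def by (auto intro: finite_subset)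
next
  fix c and f :: "'x \<Rightarrow> 'k" assume "f \<in> fsfun X"
  then show "(\<lambda>x. c * f x) \<in> fsfun X"
    using supp_smult[of c f] unfolding fsfun_def by (auto intro: finite_subset)
qed

lemma kspan_subset_fsfun: "S \<subseteq> fsfun X \<Longrightarrow> kspan S \<subseteq> fsfun X"
  by (rule kspan_least[OF is_subspace_fsfun])

lemma delta_in_fsfun: "y \<in> X \<Longrightarrow> (delta y :: 'x \<Rightarrow> 'k::field) \<in> fsfun X"
  unfolding fsfun_def by (simp add: supp_delta)

text \<open>Linearity is only required on finitely supported arguments: for the others the
  sums over \<open>supp\<close> in \<open>conv\<close>, \<open>phi_map\<close> and \<open>bimod_act\<close> are meaningless.\<close>
definition fs_linear :: "(('x \<Rightarrow> 'k::field) \<Rightarrow> 'y \<Rightarrow> 'k) \<Rightarrow> bool" where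
  "fs_linear F \<longleftrightarrow>
     (\<forall>f g. finite (supp f) \<longrightarrow> finite (supp g) \<longrightarrow> F (\<lambda>x. f x + g x) = (\<lambda>y. F f y + F g y))
   \<and> (\<forall>c f. finite (supp f) \<longrightarrow> F (\<lambda>x. c * f x) = (\<lambda>y. c * F f y))"

lemma fs_linearI:
  assumes "\<And>f g. finite (supp f) \<Longrightarrow> finite (supp g) \<Longrightarrow> F (\<lambda>x. f x + g x) = (\<lambda>y. F f y + F g y)"
    and "\<And>c f. finite (supp f) \<Longrightarrow> F (\<lambda>x. c * f x) = (\<lambda>y. c * F f y)"
  shows "fs_linear F"
  using assms unfolding fs_linear_def by blast

lemma fs_linear_add:
  "fs_linear F \<Longrightarrow> finite (supp f) \<Longrightarrow> finite (supp g)
    \<Longrightarrow> F (\<lambda>x. f x + g x) = (\<lambda>y. F f y + F g y)"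
  unfolding fs_linear_def by simp

lemma fs_linear_smult:
  "fs_linear F \<Longrightarrow> finite (supp f) \<Longrightarrow> F (\<lambda>x. c * f x) = (\<lambda>y. c * F f y)"
  unfolding fs_linear_def by simp

lemma fs_linear_diff:
  fixes F :: "('x \<Rightarrow> 'k::field) \<Rightarrow> 'y \<Rightarrow> 'k"
  assumes F: "fs_linear F" and fg: "finite (supp f)" "finite (supp g)"
  shows "F (\<lambda>x. f x - g x) = (\<lambda>y. F f y - F g y)"
proof -
  have "F (\<lambda>x. f x + (-1) * g x) = (\<lambda>y. F f y + F (\<lambda>x. (-1) * g x) y)"
    by (rule fs_linear_add[OF F fg(1) finite_supp_smult[OF fg(2)]])
  also have "\<dots> = (\<lambda>y. F f y + (-1) * F g y)"
    by (simp only: fs_linear_smult[OF F fg(2)])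
  finally show ?thesis by simp
qed

lemma fs_linear_zero:
  fixes F :: "('x \<Rightarrow> 'k::field) \<Rightarrow> 'y \<Rightarrow> 'k"
  assumes "fs_linear F" shows "F (\<lambda>_. 0) = (\<lambda>_. 0)"
proof -
  have "F (\<lambda>x. 0 * (0::'k)) = (\<lambda>y. 0 * F (\<lambda>_. 0) y)"
    by (rule fs_linear_smult[OF assms]) (simp add: supp_def)
  then show ?thesis by simp
qed

lemma kspan_linear_image:
  assumes F: "fs_linear F" and W: "is_subspace W"
    and S: "\<And>s. s \<in> S \<Longrightarrow> finite (supp s)" "\<And>s. s \<in> S \<Longrightarrow> F s \<in> W"
    and f: "f \<in> kspan S"
  shows "F f \<in> W"
proof -
  let ?Q = "{f. finite (supp f) \<and> F f \<in> W}"
  have "is_subspace ?Q"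
    unfolding is_subspace_def
  proof (intro conjI ballI allI)
    show "(\<lambda>_. 0) \<in> ?Q"
      using fs_linear_zero[OF F] subspace_zero[OF W] by (simp add: supp_def)
  next
    fix f g assume "f \<in> ?Q" "g \<in> ?Q"
    then show "(\<lambda>x. f x + g x) \<in> ?Q"
      by (simp add: fs_linear_add[OF F] finite_supp_add subspace_add[OF W])
  next
    fix c f assume "f \<in> ?Q"
    then show "(\<lambda>x. c * f x) \<in> ?Q"
      by (simp add: fs_linear_smult[OF F] finite_supp_smult subspace_smult[OF W])
  qed
  then have "kspan S \<subseteq> ?Q" by (rule kspan_least) (use S in blast)
  with f show ?thesis by blast
qed

lemma is_subspace_linear_image:
  assumes F: "fs_linear F" and V: "is_subspace V" "\<And>f. f \<in> V \<Longrightarrow> finite (supp f)"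
  shows "is_subspace (F ` V)"
  unfolding is_subspace_def
proof (intro conjI ballI allI)
  have "F (\<lambda>_. 0) \<in> F ` V" using subspace_zero[OF V(1)] by blast
  then show "(\<lambda>_. 0) \<in> F ` V" by (simp only: fs_linear_zero[OF F])
next
  fix f g assume "f \<in> F ` V" "g \<in> F ` V"
  then obtain f' g' where fg: "f' \<in> V" "g' \<in> V" "f = F f'" "g = F g'" by blast
  then have "F (\<lambda>x. f' x + g' x) \<in> F ` V" using subspace_add[OF V(1)] by blast
  then show "(\<lambda>x. f x + g x) \<in> F ` V" using fg by (simp add: fs_linear_add[OF F] V(2))
next
  fix c f assume "f \<in> F ` V"
  then obtain f' where f: "f' \<in> V" "f = F f'" by blast
  then have "F (\<lambda>x. c * f' x) \<in> F ` V" using subspace_smult[OF V(1)] by blast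
  then show "(\<lambda>x. c * f x) \<in> F ` V" using f by (simp add: fs_linear_smult[OF F] V(2))
qed

section \<open>The group algebra\<close>

lemma sum_supp_extend:
  fixes f :: "'x \<Rightarrow> 'k::zero"
  assumes "finite U" "supp f \<subseteq> U" "\<And>x. f x = 0 \<Longrightarrow> h x = 0"
  shows "(\<Sum>x\<in>supp f. h x) = (\<Sum>x\<in>U. h x)"
  using assms by (intro sum.mono_neutral_left) (auto simp: supp_def)

lemma fs_expansion:
  fixes f :: "'x \<Rightarrow> 'k::field"
  assumes "finite (supp f)"
  shows "f x = (\<Sum>a\<in>supp f. f a * delta a x)"
proof -
  have "(\<Sum>a\<in>supp f. f a * delta a x) = (\<Sum>a\<in>supp f. if a = x then f a else 0)"
    by (rule sum.cong) (auto simp: delta_def)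
  also have "\<dots> = f x" using assms by (auto simp: sum.delta' supp_def)
  finally show ?thesis by simp
qed

lemma conv_expand:
  fixes u v :: "'g \<Rightarrow> 'k::field"
  assumes "finite U" "finite V" "supp u \<subseteq> U" "supp v \<subseteq> V"
  shows "conv G u v x = (\<Sum>g\<in>U. \<Sum>h\<in>V. if g \<otimes>\<^bsub>G\<^esub> h = x then u g * v h else 0)"
proof -
  have "conv G u v x
      = (\<Sum>p\<in>U \<times> V. if fst p \<otimes>\<^bsub>G\<^esub> snd p = x then u (fst p) * v (snd p) else 0)"
    unfolding conv_def using assms by (intro sum.mono_neutral_left) (auto simp: supp_def)
  then show ?thesis by (simp add: sum.cartesian_product split_def)
qed

lemma supp_conv: "supp (conv G u v) \<subseteq> (\<lambda>p. fst p \<otimes>\<^bsub>G\<^esub> snd p) ` (supp u \<times> supp v)"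
proof
  fix x assume "x \<in> supp (conv G u v)"
  then have "conv G u v x \<noteq> 0" by (simp add: supp_def)
  then obtain p where "p \<in> supp u \<times> supp v" "fst p \<otimes>\<^bsub>G\<^esub> snd p = x"
    unfolding conv_def by (smt (verit) sum.neutral)
  then show "x \<in> (\<lambda>p. fst p \<otimes>\<^bsub>G\<^esub> snd p) ` (supp u \<times> supp v)" by force
qed

lemma finite_supp_conv: "finite (supp u) \<Longrightarrow> finite (supp v) \<Longrightarrow> finite (supp (conv G u v))"
  by (rule finite_subset[OF supp_conv]) simp

lemma conv_fsfun:
  assumes "monoid G" "u \<in> fsfun (carrier G)" "v \<in> fsfun (carrier G)"
  shows "conv G u v \<in> fsfun (carrier G)"
proof -
  have "(\<lambda>p. fst p \<otimes>\<^bsub>G\<^esub> snd p) ` (supp u \<times> supp v) \<subseteq> carrier G"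
    using assms(2,3) monoid.m_closed[OF assms(1)] by (fastforce simp: fsfun_def)
  moreover have "finite (supp (conv G u v))"
    using assms(2,3) by (intro finite_supp_conv) (auto simp: fsfun_def)
  ultimately show ?thesis using supp_conv[of G u v] unfolding fsfun_def by blast
qed

lemma fs_linear_conv_left:
  fixes w :: "'g \<Rightarrow> 'k::field"
  assumes w: "finite (supp w)"
  shows "fs_linear (\<lambda>u. conv G u w)"
proof (rule fs_linearI; rule ext)
  fix u u' :: "'g \<Rightarrow> 'k" and x
  assume u: "finite (supp u)" "finite (supp u')"
  let ?U = "supp u \<union> supp u'"
  have "conv G (\<lambda>x. u x + u' x) w x
      = (\<Sum>g\<in>?U. \<Sum>h\<in>supp w. if g \<otimes>\<^bsub>G\<^esub> h = x then (u g + u' g) * w h else 0)"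
    using u w supp_add[of u u'] by (intro conv_expand) auto
  also have "\<dots> = (\<Sum>g\<in>?U. \<Sum>h\<in>supp w. if g \<otimes>\<^bsub>G\<^esub> h = x then u g * w h else 0)
      + (\<Sum>g\<in>?U. \<Sum>h\<in>supp w. if g \<otimes>\<^bsub>G\<^esub> h = x then u' g * w h else 0)"
    by (simp add: sum.distrib[symmetric] distrib_right if_distrib cong: if_cong)
  also have "\<dots> = conv G u w x + conv G u' w x"
    using u w by (simp add: conv_expand[of ?U "supp w"])
  finally show "conv G (\<lambda>x. u x + u' x) w x = conv G u w x + conv G u' w x" .
next
  fix c and u :: "'g \<Rightarrow> 'k" and x
  assume u: "finite (supp u)"
  have "conv G (\<lambda>x. c * u x) w x
      = (\<Sum>g\<in>supp u. \<Sum>h\<in>supp w. if g \<otimes>\<^bsub>G\<^esub> h = x then (c * u g) * w h else 0)"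
    using u w supp_smult[of c u] by (intro conv_expand) auto
  also have "\<dots> = c * conv G u w x"
    using u w by (simp add: conv_expand[of "supp u" "supp w"] sum_distrib_left if_distrib
        mult.assoc cong: if_cong)
  finally show "conv G (\<lambda>x. c * u x) w x = c * conv G u w x" .
qed

lemma fs_linear_conv_right:
  fixes u :: "'g \<Rightarrow> 'k::field"
  assumes u: "finite (supp u)"
  shows "fs_linear (conv G u)"
proof (rule fs_linearI; rule ext)
  fix v v' :: "'g \<Rightarrow> 'k" and x
  assume v: "finite (supp v)" "finite (supp v')"
  let ?V = "supp v \<union> supp v'"
  have "conv G u (\<lambda>x. v x + v' x) x
      = (\<Sum>g\<in>supp u. \<Sum>h\<in>?V. if g \<otimes>\<^bsub>G\<^esub> h = x then u g * (v h + v' h) else 0)"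
    using u v supp_add[of v v'] by (intro conv_expand) auto
  also have "\<dots> = (\<Sum>g\<in>supp u. \<Sum>h\<in>?V. if g \<otimes>\<^bsub>G\<^esub> h = x then u g * v h else 0)
      + (\<Sum>g\<in>supp u. \<Sum>h\<in>?V. if g \<otimes>\<^bsub>G\<^esub> h = x then u g * v' h else 0)"
    by (simp add: sum.distrib[symmetric] distrib_left if_distrib cong: if_cong)
  also have "\<dots> = conv G u v x + conv G u v' x"
    using u v by (simp add: conv_expand[of "supp u" ?V])
  finally show "conv G u (\<lambda>x. v x + v' x) x = conv G u v x + conv G u v' x" .
next
  fix c and v :: "'g \<Rightarrow> 'k" and x
  assume v: "finite (supp v)"
  have "conv G u (\<lambda>x. c * v x) x
      = (\<Sum>g\<in>supp u. \<Sum>h\<in>supp v. if g \<otimes>\<^bsub>G\<^esub> h = x then u g * (c * v h) else 0)"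
    using u v supp_smult[of c v] by (intro conv_expand) auto
  also have "\<dots> = c * conv G u v x"
    using u v by (simp add: conv_expand[of "supp u" "supp v"] sum_distrib_left if_distrib
        mult.left_commute cong: if_cong)
  finally show "conv G u (\<lambda>x. c * v x) x = c * conv G u v x" .
qed

lemma sum_swap_outer_pair_inside:
  "(\<Sum>p\<in>P. \<Sum>k\<in>K. \<Sum>g\<in>U. \<Sum>h\<in>V. F p k g h) = (\<Sum>g\<in>U. \<Sum>h\<in>V. \<Sum>k\<in>K. \<Sum>p\<in>P. F p k g h)"
proof -
  have "(\<Sum>p\<in>P. \<Sum>k\<in>K. \<Sum>g\<in>U. \<Sum>h\<in>V. F p k g h) = (\<Sum>k\<in>K. \<Sum>p\<in>P. \<Sum>g\<in>U. \<Sum>h\<in>V. F p k g h)"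
    by (rule sum.swap)
  also have "\<dots> = (\<Sum>k\<in>K. \<Sum>g\<in>U. \<Sum>h\<in>V. \<Sum>p\<in>P. F p k g h)"
    by (rule sum.cong[OF refl], rule trans[OF sum.swap], rule sum.cong[OF refl], rule sum.swap)
  also have "\<dots> = (\<Sum>g\<in>U. \<Sum>h\<in>V. \<Sum>k\<in>K. \<Sum>p\<in>P. F p k g h)"
    by (rule trans[OF sum.swap], rule sum.cong[OF refl], rule sum.swap)
  finally show ?thesis .
qed

lemma sum_swap_second_inside:
  "(\<Sum>g\<in>U. \<Sum>q\<in>Q. \<Sum>h\<in>V. \<Sum>k\<in>K. F g q h k) = (\<Sum>g\<in>U. \<Sum>h\<in>V. \<Sum>k\<in>K. \<Sum>q\<in>Q. F g q h k)"
  by (rule sum.cong[OF refl], rule trans[OF sum.swap], rule sum.cong[OF refl], rule sum.swap)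

lemma sum_delta_conj:
  assumes "finite P"
  shows "(\<Sum>p\<in>P. if a = p \<and> Q p then c else 0) = (if a \<in> P \<and> Q a then c else 0)"
proof -
  have "(\<Sum>p\<in>P. if a = p \<and> Q p then c else 0) = (\<Sum>p\<in>P. if a = p then (if Q a then c else 0) else 0)"
    by (intro sum.cong) auto
  then show ?thesis using assms by simp
qed

lemma conv_conv_left:
  fixes u v w :: "'g \<Rightarrow> 'k::field"
  assumes "finite (supp u)" "finite (supp v)" "finite (supp w)"
  shows "conv G (conv G u v) w x = (\<Sum>g\<in>supp u. \<Sum>h\<in>supp v. \<Sum>k\<in>supp w.
      if (g \<otimes>\<^bsub>G\<^esub> h) \<otimes>\<^bsub>G\<^esub> k = x then u g * v h * w k else 0)"
proof -
  let ?U = "supp u" and ?V = "supp v" and ?W = "supp w"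
  let ?P = "(\<lambda>p. fst p \<otimes>\<^bsub>G\<^esub> snd p) ` (?U \<times> ?V)"
  have P: "finite ?P" using assms by auto
  have "conv G (conv G u v) w x
      = (\<Sum>p\<in>?P. \<Sum>k\<in>?W. if p \<otimes>\<^bsub>G\<^esub> k = x then conv G u v p * w k else 0)"
    using assms P supp_conv[of G u v] by (intro conv_expand) auto
  also have "\<dots> = (\<Sum>p\<in>?P. \<Sum>k\<in>?W. \<Sum>g\<in>?U. \<Sum>h\<in>?V.
      if g \<otimes>\<^bsub>G\<^esub> h = p \<and> p \<otimes>\<^bsub>G\<^esub> k = x then u g * v h * w k else 0)"
    using assms
    by (intro sum.cong refl)
      (auto simp: conv_expand[of ?U ?V] sum_distrib_right intro!: sum.cong)
  also have "\<dots> = (\<Sum>g\<in>?U. \<Sum>h\<in>?V. \<Sum>k\<in>?W. \<Sum>p\<in>?P.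
      if g \<otimes>\<^bsub>G\<^esub> h = p \<and> p \<otimes>\<^bsub>G\<^esub> k = x then u g * v h * w k else 0)"
    by (rule sum_swap_outer_pair_inside)
  also have "\<dots> = (\<Sum>g\<in>?U. \<Sum>h\<in>?V. \<Sum>k\<in>?W.
      if (g \<otimes>\<^bsub>G\<^esub> h) \<otimes>\<^bsub>G\<^esub> k = x then u g * v h * w k else 0)"
    using P by (intro sum.cong refl) (force simp: sum_delta_conj)
  finally show ?thesis .
qed

lemma conv_conv_right:
  fixes u v w :: "'g \<Rightarrow> 'k::field"
  assumes "finite (supp u)" "finite (supp v)" "finite (supp w)"
  shows "conv G u (conv G v w) x = (\<Sum>g\<in>supp u. \<Sum>h\<in>supp v. \<Sum>k\<in>supp w.
      if g \<otimes>\<^bsub>G\<^esub> (h \<otimes>\<^bsub>G\<^esub> k) = x then u g * v h * w k else 0)"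
proof -
  let ?U = "supp u" and ?V = "supp v" and ?W = "supp w"
  let ?Q = "(\<lambda>p. fst p \<otimes>\<^bsub>G\<^esub> snd p) ` (?V \<times> ?W)"
  have Q: "finite ?Q" using assms by auto
  have "conv G u (conv G v w) x
      = (\<Sum>g\<in>?U. \<Sum>q\<in>?Q. if g \<otimes>\<^bsub>G\<^esub> q = x then u g * conv G v w q else 0)"
    using assms Q supp_conv[of G v w] by (intro conv_expand) auto
  also have "\<dots> = (\<Sum>g\<in>?U. \<Sum>q\<in>?Q. \<Sum>h\<in>?V. \<Sum>k\<in>?W.
      if h \<otimes>\<^bsub>G\<^esub> k = q \<and> g \<otimes>\<^bsub>G\<^esub> q = x then u g * v h * w k else 0)"
    using assms
    by (intro sum.cong refl)
      (auto simp: conv_expand[of ?V ?W] sum_distrib_left mult.assoc intro!: sum.cong)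
  also have "\<dots> = (\<Sum>g\<in>?U. \<Sum>h\<in>?V. \<Sum>k\<in>?W. \<Sum>q\<in>?Q.
      if h \<otimes>\<^bsub>G\<^esub> k = q \<and> g \<otimes>\<^bsub>G\<^esub> q = x then u g * v h * w k else 0)"
    by (rule sum_swap_second_inside)
  also have "\<dots> = (\<Sum>g\<in>?U. \<Sum>h\<in>?V. \<Sum>k\<in>?W.
      if g \<otimes>\<^bsub>G\<^esub> (h \<otimes>\<^bsub>G\<^esub> k) = x then u g * v h * w k else 0)"
    using Q by (intro sum.cong refl) (force simp: sum_delta_conj)
  finally show ?thesis .
qed

lemma conv_assoc:
  fixes u v w :: "'g \<Rightarrow> 'k::field"
  assumes "monoid G" "u \<in> fsfun (carrier G)" "v \<in> fsfun (carrier G)" "w \<in> fsfun (carrier G)"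
  shows "conv G (conv G u v) w = conv G u (conv G v w)"
proof
  fix x
  have f: "finite (supp u)" "finite (supp v)" "finite (supp w)"
    and c: "supp u \<subseteq> carrier G" "supp v \<subseteq> carrier G" "supp w \<subseteq> carrier G"
    using assms by (auto simp: fsfun_def)
  show "conv G (conv G u v) w x = conv G u (conv G v w) x"
    unfolding conv_conv_left[OF f] conv_conv_right[OF f]
    using c by (intro sum.cong refl) (auto simp: monoid.m_assoc[OF assms(1)] subset_eq)
qed

lemma conv_one_left:
  fixes f :: "'g \<Rightarrow> 'k::field"
  assumes "monoid G" "f \<in> fsfun (carrier G)"
  shows "conv G (delta \<one>\<^bsub>G\<^esub>) f = f"
proof
  fix x
  have f: "finite (supp f)" "supp f \<subseteq> carrier G" using assms by (auto simp: fsfun_def)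
  have "conv G (delta \<one>\<^bsub>G\<^esub>) f x
      = (\<Sum>h\<in>supp f. if \<one>\<^bsub>G\<^esub> \<otimes>\<^bsub>G\<^esub> h = x then delta \<one>\<^bsub>G\<^esub> \<one>\<^bsub>G\<^esub> * f h else 0)"
    using f conv_expand[of "{\<one>\<^bsub>G\<^esub>}" "supp f" "delta \<one>\<^bsub>G\<^esub>" f G x] by (simp add: supp_delta)
  also have "\<dots> = (\<Sum>h\<in>supp f. if h = x then f h else 0)"
    using f by (intro sum.cong refl) (auto simp: delta_def monoid.l_one[OF assms(1)] subset_eq)
  also have "\<dots> = f x" using f by (simp add: sum.delta supp_def)
  finally show "conv G (delta \<one>\<^bsub>G\<^esub>) f x = f x" .
qed

lemma conv_one_right:
  fixes f :: "'g \<Rightarrow> 'k::field"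
  assumes "monoid G" "f \<in> fsfun (carrier G)"
  shows "conv G f (delta \<one>\<^bsub>G\<^esub>) = f"
proof
  fix x
  have f: "finite (supp f)" "supp f \<subseteq> carrier G" using assms by (auto simp: fsfun_def)
  have "conv G f (delta \<one>\<^bsub>G\<^esub>) x
      = (\<Sum>g\<in>supp f. if g \<otimes>\<^bsub>G\<^esub> \<one>\<^bsub>G\<^esub> = x then f g * delta \<one>\<^bsub>G\<^esub> \<one>\<^bsub>G\<^esub> else 0)"
    using f conv_expand[of "supp f" "{\<one>\<^bsub>G\<^esub>}" f "delta \<one>\<^bsub>G\<^esub>" G x] by (simp add: supp_delta)
  also have "\<dots> = (\<Sum>g\<in>supp f. if g = x then f g else 0)"
    using f by (intro sum.cong refl) (auto simp: delta_def monoid.r_one[OF assms(1)] subset_eq)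
  also have "\<dots> = f x" using f by (simp add: sum.delta supp_def)
  finally show "conv G f (delta \<one>\<^bsub>G\<^esub>) x = f x" .
qed

lemma augmentation_expand:
  fixes f :: "'x \<Rightarrow> 'k::field"
  assumes "finite U" "supp f \<subseteq> U"
  shows "augmentation f = (\<Sum>x\<in>U. f x)"
  unfolding augmentation_def using assms by (intro sum_supp_extend) auto

lemma augmentation_conv:
  fixes u v :: "'g \<Rightarrow> 'k::field"
  assumes "finite (supp u)" "finite (supp v)"
  shows "augmentation (conv G u v) = augmentation u * augmentation v"
proof -
  let ?U = "supp u" and ?V = "supp v"
  let ?P = "(\<lambda>p. fst p \<otimes>\<^bsub>G\<^esub> snd p) ` (?U \<times> ?V)"
  have P: "finite ?P" using assms by auto
  have "augmentation (conv G u v) = (\<Sum>x\<in>?P. conv G u v x)"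
    using P supp_conv[of G u v] by (rule augmentation_expand)
  also have "\<dots> = (\<Sum>x\<in>?P. \<Sum>g\<in>?U. \<Sum>h\<in>?V. if g \<otimes>\<^bsub>G\<^esub> h = x then u g * v h else 0)"
    using assms by (intro sum.cong refl conv_expand) auto
  also have "\<dots> = (\<Sum>g\<in>?U. \<Sum>h\<in>?V. \<Sum>x\<in>?P. if g \<otimes>\<^bsub>G\<^esub> h = x then u g * v h else 0)"
    by (rule trans[OF sum.swap], rule sum.cong[OF refl], rule sum.swap)
  also have "\<dots> = (\<Sum>g\<in>?U. \<Sum>h\<in>?V. u g * v h)"
    using P by (intro sum.cong refl) (force simp: sum_delta_conj[where Q = "\<lambda>_. True", simplified])
  also have "\<dots> = augmentation u * augmentation v"
    by (simp add: augmentation_def sum_product)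
  finally show ?thesis .
qed

section \<open>Powers of the augmentation ideal\<close>

lemma aug_ideal_fsfun: "aug_ideal G \<subseteq> fsfun (carrier G)"
  unfolding aug_ideal_def by auto

lemma conv_aug_ideal_right:
  assumes "monoid G" "u \<in> fsfun (carrier G)" "v \<in> aug_ideal G"
  shows "conv G u v \<in> aug_ideal G"
  using assms conv_fsfun[OF assms(1)] augmentation_conv[of u v G]
  unfolding aug_ideal_def fsfun_def by auto

lemma delta_diff_aug_ideal:
  assumes "p \<in> carrier G" "q \<in> carrier G"
  shows "(\<lambda>x. delta p x - delta q x :: 'k::field) \<in> aug_ideal G"
proof -
  have supp: "supp (\<lambda>x. delta p x - delta q x :: 'k) \<subseteq> {p, q}"
    by (auto simp: supp_def delta_def)
  have "augmentation (\<lambda>x. delta p x - delta q x :: 'k) = (\<Sum>x\<in>{p, q}. delta p x - delta q x)"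
    using supp by (intro augmentation_expand) auto
  also have "\<dots> = 0" by (cases "p = q") (simp_all add: delta_def)
  finally show ?thesis
    unfolding aug_ideal_def fsfun_def using supp assms by (auto intro: finite_subset)
qed

lemma aug_pow_fsfun: "monoid G \<Longrightarrow> aug_pow G n \<subseteq> (fsfun (carrier G) :: ('g \<Rightarrow> 'k::field) set)"
proof (induction n)
  case 0
  then show ?case by simp
next
  case (Suc n)
  have "conv G u v \<in> fsfun (carrier G)" if "u \<in> aug_ideal G" "v \<in> aug_pow G n" for u v :: "'g \<Rightarrow> 'k"
    using that Suc aug_ideal_fsfun conv_fsfun by blast
  then show ?case by (auto intro!: kspan_subset_fsfun)
qed

lemma is_subspace_aug_pow: "is_subspace (aug_pow G n :: ('g \<Rightarrow> 'k::field) set)"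
  by (cases n) (simp_all add: is_subspace_fsfun is_subspace_kspan)

lemma finite_supp_aug_pow:
  "monoid G \<Longrightarrow> (v :: 'g \<Rightarrow> 'k::field) \<in> aug_pow G n \<Longrightarrow> finite (supp v)"
  using aug_pow_fsfun by (fastforce simp: fsfun_def)

lemma conv_in_aug_pow_Suc:
  "u \<in> aug_ideal G \<Longrightarrow> v \<in> aug_pow G n \<Longrightarrow> conv G u v \<in> aug_pow G (Suc n)"
  using kspan_superset by fastforce

lemma aug_ideal_subset_aug_pow_1:
  assumes G: "monoid G" and u: "u \<in> aug_ideal G"
  shows "(u :: 'g \<Rightarrow> 'k::field) \<in> aug_pow G 1"
proof -
  have "(delta \<one>\<^bsub>G\<^esub> :: 'g \<Rightarrow> 'k) \<in> aug_pow G 0"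
    by (simp add: delta_in_fsfun monoid.one_closed[OF G])
  from conv_in_aug_pow_Suc[OF u this] show ?thesis
    using conv_one_right[OF G] u aug_ideal_fsfun by fastforce
qed

lemma conv_aug_pow_left_ideal:
  assumes G: "monoid G" and u: "(u :: 'g \<Rightarrow> 'k::field) \<in> fsfun (carrier G)"
  shows "w \<in> aug_pow G m \<Longrightarrow> conv G u w \<in> aug_pow G m"
proof (induction m arbitrary: w)
  case 0
  then show ?case using conv_fsfun[OF G u] by simp
next
  case (Suc m)
  show ?case
  proof (rule kspan_linear_image[OF fs_linear_conv_right is_subspace_aug_pow])
    show "finite (supp u)" using u by (simp add: fsfun_def)
    show "w \<in> kspan {conv G x y | x y. x \<in> aug_ideal G \<and> y \<in> aug_pow G m}"
      using Suc.prems by simp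
  next
    fix v :: "'g \<Rightarrow> 'k" assume "v \<in> {conv G x y | x y. x \<in> aug_ideal G \<and> y \<in> aug_pow G m}"
    then obtain x y where v: "v = conv G x y" "x \<in> aug_ideal G" "y \<in> aug_pow G m" by blast
    have x: "x \<in> fsfun (carrier G)" and y: "y \<in> fsfun (carrier G)"
      using v aug_ideal_fsfun aug_pow_fsfun[OF G] by blast+
    then show "finite (supp v)" using v(1) by (simp add: finite_supp_conv fsfun_def)
    have "conv G u v = conv G (conv G u x) y" using conv_assoc[OF G u x y] v(1) by simp
    then show "conv G u v \<in> aug_pow G (Suc m)"
      using conv_in_aug_pow_Suc[OF conv_aug_ideal_right[OF G u v(2)] v(3)] by simp
  qed
qed

lemma conv_aug_pow:
  assumes G: "monoid G" and w: "(w :: 'g \<Rightarrow> 'k::field) \<in> aug_pow G m"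
  shows "u \<in> aug_pow G j \<Longrightarrow> conv G u w \<in> aug_pow G (j + m)"
proof (induction j arbitrary: u)
  case 0
  then show ?case using conv_aug_pow_left_ideal[OF G _ w] by simp
next
  case (Suc j)
  show ?case
  proof (rule kspan_linear_image[OF fs_linear_conv_left is_subspace_aug_pow])
    show "finite (supp w)" using finite_supp_aug_pow[OF G w] .
    show "u \<in> kspan {conv G x y | x y. x \<in> aug_ideal G \<and> y \<in> aug_pow G j}"
      using Suc.prems by simp
  next
    fix v :: "'g \<Rightarrow> 'k" assume "v \<in> {conv G x y | x y. x \<in> aug_ideal G \<and> y \<in> aug_pow G j}"
    then obtain x y where v: "v = conv G x y" "x \<in> aug_ideal G" "y \<in> aug_pow G j" by blast
    have x: "x \<in> fsfun (carrier G)" and y: "y \<in> fsfun (carrier G)"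
      using v aug_ideal_fsfun aug_pow_fsfun[OF G] by blast+
    then show "finite (supp v)" using v(1) by (simp add: finite_supp_conv fsfun_def)
    have "conv G v w = conv G x (conv G y w)"
      using conv_assoc[OF G x y] aug_pow_fsfun[OF G] w v(1) by blast
    then show "conv G v w \<in> aug_pow G (Suc j + m)"
      using conv_in_aug_pow_Suc[OF v(2) Suc.IH[OF v(3)]] by simp
  qed
qed

section \<open>The map \<open>\<phi>\<close>\<close>

lemma phi_map_expand:
  fixes f :: "'a \<Rightarrow> 'k::field"
  assumes "finite B" "supp f \<subseteq> B"
  shows "phi_map s t f x = (\<Sum>a\<in>B. f a * (delta (t a) x - delta (s a) x))"
  unfolding phi_map_def using assms by (intro sum_supp_extend) auto

lemma fs_linear_phi_map: "fs_linear (phi_map s t :: ('a \<Rightarrow> 'k::field) \<Rightarrow> _)"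
proof (rule fs_linearI; rule ext)
  fix f g :: "'a \<Rightarrow> 'k" and x
  assume fg: "finite (supp f)" "finite (supp g)"
  let ?B = "supp f \<union> supp g"
  have "phi_map s t (\<lambda>x. f x + g x) x = (\<Sum>a\<in>?B. (f a + g a) * (delta (t a) x - delta (s a) x))"
    using fg supp_add[of f g] by (intro phi_map_expand) auto
  also have "\<dots> = phi_map s t f x + phi_map s t g x"
    using fg by (simp add: phi_map_expand[of ?B] distrib_right sum.distrib)
  finally show "phi_map s t (\<lambda>x. f x + g x) x = phi_map s t f x + phi_map s t g x" .
next
  fix c and f :: "'a \<Rightarrow> 'k" and x
  assume f: "finite (supp f)"
  have "phi_map s t (\<lambda>x. c * f x) x = (\<Sum>a\<in>supp f. (c * f a) * (delta (t a) x - delta (s a) x))"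
    using f supp_smult[of c f] by (intro phi_map_expand) auto
  also have "\<dots> = c * phi_map s t f x"
    using f by (simp add: phi_map_expand[of "supp f"] sum_distrib_left mult.assoc)
  finally show "phi_map s t (\<lambda>x. c * f x) x = c * phi_map s t f x" .
qed

lemma supp_bimod_act:
  "supp (bimod_act l r v1 a v2) \<subseteq> (\<lambda>p. l (fst p) (r a (snd p))) ` (supp v1 \<times> supp v2)"
proof
  fix x assume "x \<in> supp (bimod_act l r v1 a v2)"
  then have "bimod_act l r v1 a v2 x \<noteq> 0" by (simp add: supp_def)
  then obtain p where "p \<in> supp v1 \<times> supp v2" "l (fst p) (r a (snd p)) = x"
    unfolding bimod_act_def by (smt (verit) sum.neutral)
  then show "x \<in> (\<lambda>p. l (fst p) (r a (snd p))) ` (supp v1 \<times> supp v2)" by force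
qed

lemma finite_supp_bimod_act:
  "finite (supp v1) \<Longrightarrow> finite (supp v2) \<Longrightarrow> finite (supp (bimod_act l r v1 a v2))"
  by (rule finite_subset[OF supp_bimod_act]) simp

lemma bimod_act_expand:
  "bimod_act l r v1 a v2 b
    = (\<Sum>g\<in>supp v1. \<Sum>h\<in>supp v2. if l g (r a h) = b then v1 g * v2 h else 0)"
  unfolding bimod_act_def by (simp add: sum.cartesian_product split_def)

lemma phi_map_bimod_act_expand:
  fixes v1 v2 :: "'g \<Rightarrow> 'k::field"
  assumes "finite (supp v1)" "finite (supp v2)"
  shows "phi_map s t (bimod_act l r v1 a v2) x = (\<Sum>g\<in>supp v1. \<Sum>h\<in>supp v2.
     v1 g * v2 h * (delta (t (l g (r a h))) x - delta (s (l g (r a h))) x))"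
proof -
  let ?U = "supp v1" and ?V = "supp v2"
  let ?B = "(\<lambda>p. l (fst p) (r a (snd p))) ` (?U \<times> ?V)"
  let ?D = "\<lambda>b. delta (t b) x - delta (s b) x"
  have B: "finite ?B" using assms by auto
  have "phi_map s t (bimod_act l r v1 a v2) x = (\<Sum>b\<in>?B. bimod_act l r v1 a v2 b * ?D b)"
    using B supp_bimod_act[of l r v1 a v2] by (intro phi_map_expand) auto
  also have "\<dots> = (\<Sum>b\<in>?B. \<Sum>g\<in>?U. \<Sum>h\<in>?V. if l g (r a h) = b then v1 g * v2 h * ?D b else 0)"
    by (auto simp: bimod_act_expand sum_distrib_right intro!: sum.cong)
  also have "\<dots> = (\<Sum>g\<in>?U. \<Sum>h\<in>?V. \<Sum>b\<in>?B. if l g (r a h) = b then v1 g * v2 h * ?D b else 0)"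
    by (rule trans[OF sum.swap], rule sum.cong[OF refl], rule sum.swap)
  also have "\<dots> = (\<Sum>g\<in>?U. \<Sum>h\<in>?V. v1 g * v2 h * ?D (l g (r a h)))"
    using B by (intro sum.cong refl) (force simp: sum_delta_conj[where Q = "\<lambda>_. True", simplified])
  finally show ?thesis .
qed

lemma conv_conv_delta_middle:
  fixes u w :: "'g \<Rightarrow> 'k::field"
  assumes "finite (supp u)" "finite (supp w)"
  shows "conv G (conv G u (delta q)) w x
    = (\<Sum>g\<in>supp u. \<Sum>k\<in>supp w. if (g \<otimes>\<^bsub>G\<^esub> q) \<otimes>\<^bsub>G\<^esub> k = x then u g * w k else 0)"
proof -
  have supp: "supp (delta q :: 'g \<Rightarrow> 'k) = {q}" by (rule supp_delta)
  show ?thesis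
    using conv_conv_left[OF assms(1) _ assms(2), of "delta q" G x] unfolding supp
    by (simp add: delta_def cong: if_cong)
qed

lemma group_like_graph_monoid: "group_like_graph G A s t l r \<Longrightarrow> monoid G"
  unfolding group_like_graph_def by (simp add: group.is_monoid)

lemma group_like_graph_endpoints:
  "group_like_graph G A s t l r \<Longrightarrow> a \<in> A \<Longrightarrow> s a \<in> carrier G \<and> t a \<in> carrier G"
  unfolding group_like_graph_def by blast

lemma phi_map_bimod_act:
  fixes v1 v2 :: "'g \<Rightarrow> 'k::field"
  assumes gl: "group_like_graph G A s t l r" and a: "a \<in> A"
    and v: "v1 \<in> fsfun (carrier G)" "v2 \<in> fsfun (carrier G)"
  shows "phi_map s t (bimod_act l r v1 a v2)
     = conv G (conv G v1 (\<lambda>x. delta (t a) x - delta (s a) x)) v2"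
proof
  fix x
  have f: "finite (supp v1)" "finite (supp v2)"
    and c: "supp v1 \<subseteq> carrier G" "supp v2 \<subseteq> carrier G"
    using v by (auto simp: fsfun_def)
  have equivariant: "s (l g (r a h)) = g \<otimes>\<^bsub>G\<^esub> s a \<otimes>\<^bsub>G\<^esub> h"
      "t (l g (r a h)) = g \<otimes>\<^bsub>G\<^esub> t a \<otimes>\<^bsub>G\<^esub> h"
    if "g \<in> carrier G" "h \<in> carrier G" for g h
    using gl a that unfolding group_like_graph_def by blast+
  have delta: "finite (supp (delta q :: 'g \<Rightarrow> 'k))" for q by (simp add: supp_delta)
  have "conv G (conv G v1 (\<lambda>x. delta (t a) x - delta (s a) x)) v2 x
      = conv G (conv G v1 (delta (t a))) v2 x - conv G (conv G v1 (delta (s a))) v2 x"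
    by (simp add: fs_linear_diff[OF fs_linear_conv_right[OF f(1)] delta delta]
        fs_linear_diff[OF fs_linear_conv_left[OF f(2)] finite_supp_conv finite_supp_conv] f delta)
  also have "\<dots> = phi_map s t (bimod_act l r v1 a v2) x"
    unfolding phi_map_bimod_act_expand[OF f] conv_conv_delta_middle[OF f] sum_subtractf[symmetric]
    using c by (intro sum.cong refl) (auto simp: equivariant subset_eq delta_def)
  finally show "phi_map s t (bimod_act l r v1 a v2) x
      = conv G (conv G v1 (\<lambda>x. delta (t a) x - delta (s a) x)) v2 x" ..
qed

section \<open>Connectedness and the two inclusions\<close>

lemma path_delta_diff_in_kspan:
  assumes "(\<lambda>u v. \<exists>a\<in>A. (s a = u \<and> t a = v) \<or> (s a = v \<and> t a = u))\<^sup>*\<^sup>* x y"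
  shows "(\<lambda>w. delta y w - delta x w :: 'k::field)
    \<in> kspan {\<lambda>w. delta (t a) w - delta (s a) w | a. a \<in> A}"
  using assms
proof (induction rule: rtranclp_induct)
  case base
  have zero: "(\<lambda>w. delta x w - delta x w :: 'k) = (\<lambda>_. 0)" by simp
  show ?case unfolding zero by (rule subspace_zero[OF is_subspace_kspan])
next
  case (step y z)
  let ?D = "{\<lambda>w. delta (t a) w - delta (s a) w :: 'k | a. a \<in> A}"
  from step(2) obtain a where a: "a \<in> A" "(s a = y \<and> t a = z) \<or> (s a = z \<and> t a = y)"
    by blast
  have edge: "(\<lambda>w. delta (t a) w - delta (s a) w :: 'k) \<in> kspan ?D"
    by (rule subsetD[OF kspan_superset]) (use a(1) in blast)
  have "(\<lambda>w. delta z w - delta y w :: 'k) \<in> kspan ?D"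
  proof (cases "s a = y \<and> t a = z")
    case True
    then show ?thesis using edge by simp
  next
    case False
    with a(2) have "s a = z" "t a = y" by auto
    then have reversed: "(\<lambda>w. delta z w - delta y w :: 'k)
        = (\<lambda>w. (-1) * (delta (t a) w - delta (s a) w))"
      by (simp add: fun_eq_iff)
    show ?thesis unfolding reversed by (rule subspace_smult[OF is_subspace_kspan edge])
  qed
  from subspace_add[OF is_subspace_kspan this step(3)]
  have "(\<lambda>w. delta z w - delta y w + (delta y w - delta x w) :: 'k) \<in> kspan ?D" .
  moreover have "(\<lambda>w. delta z w - delta y w + (delta y w - delta x w) :: 'k)
      = (\<lambda>w. delta z w - delta x w)"
    by (simp add: fun_eq_iff)
  ultimately show ?case by simp
qed

text \<open>Since its coefficients sum to zero, an element x of I(G) is the combination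
  \<open>\<Sum> x g (g - 1)\<close>, and each \<open>g - 1\<close> telescopes along a path from 1 to g.\<close>
lemma aug_ideal_subset_kspan_edges:
  fixes x :: "'g \<Rightarrow> 'k::field"
  assumes G: "monoid G" and connected: "path_connected_graph (carrier G) A s t"
    and x: "x \<in> aug_ideal G"
  shows "x \<in> kspan {\<lambda>w. delta (t a) w - delta (s a) w | a. a \<in> A}"
proof -
  have supp: "finite (supp x)" "supp x \<subseteq> carrier G" and aug: "(\<Sum>g\<in>supp x. x g) = 0"
    using x by (auto simp: aug_ideal_def fsfun_def augmentation_def)
  have "x w = (\<Sum>g\<in>supp x. x g * (delta g w - delta \<one>\<^bsub>G\<^esub> w))" for w
  proof -
    have "(\<Sum>g\<in>supp x. x g * (delta g w - delta \<one>\<^bsub>G\<^esub> w))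
        = (\<Sum>g\<in>supp x. x g * delta g w) - (\<Sum>g\<in>supp x. x g) * delta \<one>\<^bsub>G\<^esub> w"
      by (simp add: right_diff_distrib sum_subtractf sum_distrib_right)
    then show ?thesis using fs_expansion[OF supp(1), of w, symmetric] aug by simp
  qed
  then have expansion: "x = (\<lambda>w. \<Sum>g\<in>supp x. x g * (delta g w - delta \<one>\<^bsub>G\<^esub> w))" ..
  have "(\<lambda>w. delta g w - delta \<one>\<^bsub>G\<^esub> w :: 'k)
      \<in> kspan {\<lambda>w. delta (t a) w - delta (s a) w | a. a \<in> A}" if "g \<in> supp x" for g
  proof -
    have "g \<in> carrier G" "\<one>\<^bsub>G\<^esub> \<in> carrier G" using that supp(2) monoid.one_closed[OF G] by auto
    with connected
    have "(\<lambda>u v. \<exists>a\<in>A. (s a = u \<and> t a = v) \<or> (s a = v \<and> t a = u))\<^sup>*\<^sup>* \<one>\<^bsub>G\<^esub> g"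
      unfolding path_connected_graph_def by blast
    then show ?thesis by (rule path_delta_diff_in_kspan)
  qed
  then show ?thesis
    by (subst expansion) (rule subspace_sum[OF is_subspace_kspan supp(1)])
qed

lemma finite_supp_aug_pow_A:
  assumes G: "monoid G" and f: "(f :: 'a \<Rightarrow> 'k::field) \<in> aug_pow_A G A l r n"
  shows "finite (supp f)"
proof -
  have "aug_pow_A G A l r n \<subseteq> (fsfun UNIV :: ('a \<Rightarrow> 'k) set)"
    unfolding aug_pow_A_def
    by (rule kspan_subset_fsfun)
      (auto simp: fsfun_def intro!: finite_supp_bimod_act finite_supp_aug_pow[OF G])
  with f show ?thesis by (auto simp: fsfun_def)
qed

lemma phi_map_aug_pow_A_subset:
  fixes G :: "('g, 'b) monoid_scheme"
  assumes gl: "group_like_graph G A s t l r"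
  shows "phi_map s t ` (aug_pow_A G A l r n :: ('a \<Rightarrow> 'k::field) set) \<subseteq> aug_pow G (Suc n)"
proof (rule image_subsetI)
  have G: "monoid G" using gl by (rule group_like_graph_monoid)
  fix f :: "'a \<Rightarrow> 'k" assume f: "f \<in> aug_pow_A G A l r n"
  show "phi_map s t f \<in> aug_pow G (Suc n)"
  proof (rule kspan_linear_image[OF fs_linear_phi_map is_subspace_aug_pow])
    show "f \<in> kspan {bimod_act l r v1 a v2 | v1 a v2 k.
       a \<in> A \<and> k \<le> n \<and> v1 \<in> aug_pow G k \<and> v2 \<in> aug_pow G (n - k)}"
      using f unfolding aug_pow_A_def .
  next
    fix b assume "b \<in> {bimod_act l r v1 a v2 | v1 a v2 k.
       a \<in> A \<and> k \<le> n \<and> v1 \<in> aug_pow G k \<and> (v2 :: 'g \<Rightarrow> 'k) \<in> aug_pow G (n - k)}"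
    then obtain v1 a v2 k where b: "b = bimod_act l r v1 a v2" "a \<in> A" "k \<le> n"
      and v: "v1 \<in> aug_pow G k" "v2 \<in> aug_pow G (n - k)" by blast
    show "finite (supp b)"
      using b(1) v by (simp add: finite_supp_bimod_act finite_supp_aug_pow[OF G])
    have "(\<lambda>x. delta (t a) x - delta (s a) x :: 'k) \<in> aug_pow G 1"
      using group_like_graph_endpoints[OF gl b(2)]
      by (intro aug_ideal_subset_aug_pow_1[OF G] delta_diff_aug_ideal) auto
    then have "conv G (conv G v1 (\<lambda>x. delta (t a) x - delta (s a) x)) v2
        \<in> aug_pow G (k + 1 + (n - k))"
      by (intro conv_aug_pow[OF G v(2)] conv_aug_pow[OF G _ v(1)])
    moreover have "v1 \<in> fsfun (carrier G)" "v2 \<in> fsfun (carrier G)"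
      using v aug_pow_fsfun[OF G] by blast+
    then have "phi_map s t b = conv G (conv G v1 (\<lambda>x. delta (t a) x - delta (s a) x)) v2"
      unfolding b(1) by (rule phi_map_bimod_act[OF gl b(2)])
    ultimately show "phi_map s t b \<in> aug_pow G (Suc n)"
      using b(3) by simp
  qed
qed

lemma aug_pow_Suc_subset_phi_map_image:
  fixes G :: "('g, 'b) monoid_scheme"
  assumes gl: "group_like_graph G A s t l r"
    and connected: "path_connected_graph (carrier G) A s t"
  shows "aug_pow G (Suc n) \<subseteq> phi_map s t ` (aug_pow_A G A l r n :: ('a \<Rightarrow> 'k::field) set)"
proof -
  have G: "monoid G" using gl by (rule group_like_graph_monoid)
  let ?V = "phi_map s t ` (aug_pow_A G A l r n :: ('a \<Rightarrow> 'k) set)"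
  have "is_subspace (aug_pow_A G A l r n :: ('a \<Rightarrow> 'k) set)"
    unfolding aug_pow_A_def by (rule is_subspace_kspan)
  then have V: "is_subspace ?V"
    using finite_supp_aug_pow_A[OF G] by (rule is_subspace_linear_image[OF fs_linear_phi_map])
  have "conv G x y \<in> ?V" if x: "x \<in> aug_ideal G" and y: "y \<in> aug_pow G n" for x y
  proof (rule kspan_linear_image[OF fs_linear_conv_left V])
    show "finite (supp y)" using finite_supp_aug_pow[OF G y] .
    show "x \<in> kspan {\<lambda>w. delta (t a) w - delta (s a) w | a. a \<in> A}"
      by (rule aug_ideal_subset_kspan_edges[OF G connected x])
  next
    fix d assume "d \<in> {\<lambda>w. delta (t a) w - delta (s a) w :: 'k | a. a \<in> A}"
    then obtain a where a: "a \<in> A" and d: "d = (\<lambda>w. delta (t a) w - delta (s a) w)" by blast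
    have "d \<in> aug_ideal G"
      unfolding d using group_like_graph_endpoints[OF gl a] by (intro delta_diff_aug_ideal) auto
    then have d_fsfun: "d \<in> fsfun (carrier G)" using aug_ideal_fsfun by blast
    then show "finite (supp d)" by (simp add: fsfun_def)
    have one: "(delta \<one>\<^bsub>G\<^esub> :: 'g \<Rightarrow> 'k) \<in> aug_pow G 0"
      by (simp add: delta_in_fsfun monoid.one_closed[OF G])
    have "bimod_act l r (delta \<one>\<^bsub>G\<^esub>) a y \<in> {bimod_act l r v1 a v2 | v1 a v2 k.
       a \<in> A \<and> k \<le> n \<and> v1 \<in> aug_pow G k \<and> v2 \<in> aug_pow G (n - k)}"
      using a one y
      by (intro CollectI exI[of _ "delta \<one>\<^bsub>G\<^esub>"] exI[of _ a] exI[of _ y] exI[of _ 0]) simp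
    then have generator: "bimod_act l r (delta \<one>\<^bsub>G\<^esub>) a y \<in> aug_pow_A G A l r n"
      unfolding aug_pow_A_def by (rule subsetD[OF kspan_superset])
    have "phi_map s t (bimod_act l r (delta \<one>\<^bsub>G\<^esub>) a y) = conv G (conv G (delta \<one>\<^bsub>G\<^esub>) d) y"
      unfolding d using one y aug_pow_fsfun[OF G] by (intro phi_map_bimod_act[OF gl a]) auto
    also have "\<dots> = conv G d y" by (simp only: conv_one_left[OF G d_fsfun])
    finally show "conv G d y \<in> ?V" by (rule image_eqI[OF sym generator])
  qed
  then show ?thesis
    by (simp only: aug_pow.simps) (rule kspan_least[OF V], blast)
qed

theorem mainTheorem9:
  fixes G :: "('g, 'b) monoid_scheme" and A :: "'a set"
    and s t :: "'a \<Rightarrow> 'g" and l :: "'g \<Rightarrow> 'a \<Rightarrow> 'a" and r :: "'a \<Rightarrow> 'g \<Rightarrow> 'a"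
  assumes "group_like_graph G A s t l r"
    and "path_connected_graph (carrier G) A s t"
  shows "\<forall>n. phi_map s t ` (aug_pow_A G A l r n :: ('a \<Rightarrow> 'k::field_char_0) set)
             = aug_pow G (Suc n)"
  using phi_map_aug_pow_A_subset[OF assms(1)] aug_pow_Suc_subset_phi_map_image[OF assms]
  by (intro allI equalityI)

end
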